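(* Let $n \geq 1$ be an integer and $q$ an arbitrary prime power. Then $m(n,q) \geq \frac{q^n-1}{q-1}$; that is, there exist affine subspaces $A_1,\ldots,A_m$ and $B_1,\ldots,B_m$ of the $n$-dimensional affine space $W$ over $\mathbb{F}_q$, with $m = \frac{q^n-1}{q-1}$, such that $A_i \cap B_i = \emptyset$ for each $1 \leq i \leq m$ and $A_i \cap B_j \neq \emptyset$ whenever $1 \leq i < j \leq m$.
   Context: Let $W$ be the $n$-dimensional affine space over the finite field $\mathbb{F}_q$; an affine subspace is a translate $v+U$ of a linear subspace $U$ of $\mathbb{F}_q^n$. A pair of families of affine subspaces $(A_i,B_i)_{1\le i\le m}$ of $W$ is called cross-intersecting if $A_i \cap B_i = \emptyset$ for each $1 \le i \le m$ and $A_i \cap B_j \neq \emptyset$ whenever $1 \le i < j \le m$. $m(n,q)$ denotes the maximal size $m$ of a cross-intersecting pair of families of affine subspaces $(A_i,B_i)_{1 \le i \le m}$ of $W$. *)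

theory Defs
  imports "HOL-Analysis.Analysis"
begin

definition affine_subspace_F :: "('a::field ^ 'n) set \<Rightarrow> bool" where
  "affine_subspace_F A \<longleftrightarrow> (\<exists>v U. vec.subspace U \<and> A = (\<lambda>u. v + u) ` U)"

definition cross_intersecting_F :: "nat \<Rightarrow> (nat \<Rightarrow> ('a::field ^ 'n) set) \<Rightarrow> (nat \<Rightarrow> ('a ^ 'n) set) \<Rightarrow> bool" where
  "cross_intersecting_F m A B \<longleftrightarrow>
     (\<forall>i\<in>{1..m}. affine_subspace_F (A i) \<and> affine_subspace_F (B i)) \<and>
     (\<forall>i\<in>{1..m}. A i \<inter> B i = {}) \<and>
     (\<forall>i j. 1 \<le> i \<longrightarrow> i < j \<longrightarrow> j \<le> m \<longrightarrow> A i \<inter> B j \<noteq> {})"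

end

theory Submission imports Defs begin

text \<open>Pick one nonzero vector \<open>a\<^sub>i\<close> on each of the \<open>(q\<^sup>n - 1)/(q - 1)\<close> lines through the
  origin, and let \<open>A\<^sub>i\<close> and \<open>B\<^sub>i\<close> be the parallel hyperplanes \<open>a\<^sub>i \<cdot> y = 0\<close> and \<open>a\<^sub>i \<cdot> y = 1\<close>.
  These are disjoint, while for \<open>i \<noteq> j\<close> the vectors \<open>a\<^sub>i, a\<^sub>j\<close> are linearly independent, so the
  system \<open>a\<^sub>i \<cdot> y = 0, a\<^sub>j \<cdot> y = 1\<close> has a solution and \<open>A\<^sub>i\<close> meets \<open>B\<^sub>j\<close>.\<close>

definition vdot :: "'a::field ^ 'n \<Rightarrow> 'a ^ 'n \<Rightarrow> 'a" where
  "vdot a y = (\<Sum>k\<in>UNIV. a$k * y$k)"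

lemma vdot_add_right: "vdot a (x + y) = vdot a x + vdot a y"
  by (simp add: vdot_def distrib_left sum.distrib)

lemma vdot_smult_right: "vdot a (c *s y) = c * vdot a y"
  by (simp add: vdot_def sum_distrib_left mult.left_commute)

lemma vdot_smult_left: "vdot (c *s a) y = c * vdot a y"
  by (simp add: vdot_def sum_distrib_left mult.assoc)

lemma vdot_diff_left: "vdot (a - b) y = vdot a y - vdot b y"
  by (simp add: vdot_def left_diff_distrib sum_subtractf)

lemma vdot_axis_right: "vdot a (axis k c) = a$k * c"
  by (simp add: vdot_def axis_def if_distrib cong: if_cong)

lemma vdot_zero_right: "vdot a 0 = 0"
  by (simp add: vdot_def)

lemma subspace_vdot_eq_0: "vec.subspace {y. vdot a y = 0}"
  by (auto simp: vec.subspace_def vdot_add_right vdot_smult_right vdot_zero_right)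

lemma affine_subspace_F_vdot_eq_0: "affine_subspace_F {y. vdot a y = 0}"
  unfolding affine_subspace_F_def using subspace_vdot_eq_0 by force

lemma affine_subspace_F_vdot_eq_1:
  assumes "a \<noteq> 0"
  shows "affine_subspace_F {y. vdot a y = 1}"
proof -
  obtain k where k: "a$k \<noteq> 0" using assms by (auto simp: vec_eq_iff)
  define v where "v = axis k (1 / a$k)"
  have v: "vdot a v = 1" using k by (simp add: v_def vdot_axis_right)
  have "{y. vdot a y = 1} = (\<lambda>u. v + u) ` {y. vdot a y = 0}"
  proof (intro set_eqI iffI)
    fix y assume "y \<in> {y. vdot a y = 1}"
    then have "y - v \<in> {y. vdot a y = 0}" "y = v + (y - v)"
      using vdot_add_right[of a v "y - v"] v by auto
    then show "y \<in> (\<lambda>u. v + u) ` {y. vdot a y = 0}" by blast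
  qed (use v in \<open>auto simp: vdot_add_right\<close>)
  then show ?thesis unfolding affine_subspace_F_def using subspace_vdot_eq_0 by blast
qed

lemma vdot_system_solvable:
  assumes a: "a \<noteq> 0" and b: "\<And>c. b \<noteq> c *s a"
  shows "\<exists>y. vdot a y = 0 \<and> vdot b y = 1"
proof -
  obtain k where k: "a$k \<noteq> 0" using a by (auto simp: vec_eq_iff)
  define b' where "b' = b - (b$k / a$k) *s a"
  have b'k: "b'$k = 0" using k by (simp add: b'_def)
  have "b' \<noteq> 0" using b by (auto simp: b'_def)
  then obtain l where l: "b'$l \<noteq> 0" by (auto simp: vec_eq_iff)
  define y where "y = axis l (1 / b'$l) + axis k (- (a$l / b'$l) / a$k)"
  have ay: "vdot a y = 0" using k l
    by (simp add: y_def vdot_add_right vdot_axis_right field_simps)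
  have "vdot b' y = 1" using l b'k
    by (simp add: y_def vdot_add_right vdot_axis_right)
  moreover have "vdot b' y = vdot b y" using ay
    by (simp add: b'_def vdot_diff_left vdot_smult_left)
  ultimately show ?thesis using ay by auto
qed

lemma cross_intersecting_F_hyperplane_pairs:
  assumes nonzero: "\<And>i. i \<in> {1..m} \<Longrightarrow> r i \<noteq> 0"
    and nonproportional: "\<And>i j c. i \<in> {1..m} \<Longrightarrow> j \<in> {1..m} \<Longrightarrow> r j = c *s r i \<Longrightarrow> i = j"
  shows "cross_intersecting_F m (\<lambda>i. {y. vdot (r i) y = 0}) (\<lambda>i. {y. vdot (r i) y = 1})"
  unfolding cross_intersecting_F_def
proof (intro conjI ballI allI impI)
  fix i assume "i \<in> {1..m}"
  then show "affine_subspace_F {y. vdot (r i) y = 0}" "affine_subspace_F {y. vdot (r i) y = 1}"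
    using nonzero affine_subspace_F_vdot_eq_0 affine_subspace_F_vdot_eq_1 by blast+
  show "{y. vdot (r i) y = 0} \<inter> {y. vdot (r i) y = 1} = {}" by auto
next
  fix i j :: nat assume "1 \<le> i" "i < j" "j \<le> m"
  then have "i \<in> {1..m}" "j \<in> {1..m}" "i \<noteq> j" by auto
  then obtain y where "vdot (r i) y = 0" "vdot (r j) y = 1"
    using vdot_system_solvable[of "r i" "r j"] nonzero nonproportional by blast
  then show "{y. vdot (r i) y = 0} \<inter> {y. vdot (r j) y = 1} \<noteq> {}" by blast
qed

definition punctured_line :: "'a::field ^ 'n \<Rightarrow> ('a ^ 'n) set" where
  "punctured_line a = (\<lambda>c. c *s a) ` (UNIV - {0})"

lemma self_in_punctured_line: "a \<in> punctured_line a"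
  unfolding punctured_line_def by (rule image_eqI[of _ _ 1]) auto

lemma punctured_line_eq:
  assumes "x \<in> punctured_line a"
  shows "punctured_line x = punctured_line a"
proof -
  obtain c where c: "c \<noteq> 0" "x = c *s a" using assms by (auto simp: punctured_line_def)
  have "(\<lambda>d. d *s x) ` (UNIV - {0}) = (\<lambda>d. d *s a) ` ((\<lambda>d. d * c) ` (UNIV - {0}))"
    using c by (auto simp: image_image vector_smult_assoc)
  also have "(\<lambda>d. d * c) ` (UNIV - {0}) = UNIV - {0}"
    using c by (auto intro!: image_eqI[of _ _ "_ / c"])
  finally show ?thesis unfolding punctured_line_def .
qed

lemma card_punctured_line:
  assumes "a \<noteq> (0::'a::{finite,field}^'n)"
  shows "card (punctured_line a) = CARD('a) - 1"
proof -
  have "inj_on (\<lambda>c. c *s a) (UNIV - {0})"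
  proof (rule inj_onI)
    fix c d assume "c *s a = d *s a"
    then have "(c - d) *s a = 0" by (simp add: vec_eq_iff algebra_simps)
    then show "c = d" using assms by (auto simp: vec_eq_iff)
  qed
  then show ?thesis unfolding punctured_line_def by (simp add: card_image card_Diff_singleton)
qed

lemma punctured_line_nonzero:
  assumes "x \<in> punctured_line a" "a \<noteq> 0"
  shows "x \<noteq> 0"
  using assms by (auto simp: punctured_line_def vec_eq_iff)

lemma card_punctured_lines:
  "card (punctured_line ` (UNIV - {0::'a::{finite,field}^'n}))
     = (CARD('a) ^ CARD('n) - 1) div (CARD('a) - 1)"
proof -
  let ?L = "punctured_line ` (UNIV - {0::'a^'n})"
  have union: "\<Union>?L = UNIV - {0}"
    using self_in_punctured_line punctured_line_nonzero by blast
  have "(CARD('a) - 1) * card ?L = card (\<Union>?L)"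
  proof (rule card_partition)
    show "\<And>L L'. L \<in> ?L \<Longrightarrow> L' \<in> ?L \<Longrightarrow> L \<noteq> L' \<Longrightarrow> L \<inter> L' = {}"
      using punctured_line_eq by blast
  qed (use card_punctured_line in force)+
  also have "\<dots> = CARD('a) ^ CARD('n) - 1"
    unfolding union by (simp add: card_Diff_singleton)
  finally have "(CARD('a) - 1) * card ?L = CARD('a) ^ CARD('n) - 1" .
  moreover have "CARD('a) - 1 \<noteq> 0"
    using card_mono[of UNIV "{0::'a, 1}"] by simp
  ultimately show ?thesis
    by (metis nonzero_mult_div_cancel_left)
qed

lemma ex_nonproportional_vectors:
  "\<exists>R :: ('a::{finite,field}^'n) set. 0 \<notin> R \<and> (\<forall>a\<in>R. \<forall>b\<in>R. \<forall>c. b = c *s a \<longrightarrow> b = a)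
     \<and> card R = (CARD('a) ^ CARD('n) - 1) div (CARD('a) - 1)"
proof -
  let ?L = "punctured_line ` (UNIV - {0::'a^'n})"
  define rep where "rep L = (SOME a. a \<in> L)" for L :: "('a^'n) set"
  have rep: "rep L \<in> L" "rep L \<noteq> 0" "punctured_line (rep L) = L" if "L \<in> ?L" for L
  proof -
    obtain x where x: "x \<noteq> 0" "L = punctured_line x" using \<open>L \<in> ?L\<close> by blast
    then have "\<exists>a. a \<in> L" using self_in_punctured_line by blast
    then show "rep L \<in> L" unfolding rep_def by (rule someI_ex)
    then show "rep L \<noteq> 0" "punctured_line (rep L) = L"
      using x punctured_line_nonzero punctured_line_eq by blast+
  qed
  have "b = a" if a: "a \<in> rep ` ?L" and b: "b \<in> rep ` ?L" and ba: "b = c *s a" for a b c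
  proof -
    obtain L L' where L: "L \<in> ?L" "a = rep L" and L': "L' \<in> ?L" "b = rep L'"
      using a b by blast
    have "c \<noteq> 0" using rep(2)[OF L'(1)] L'(2) ba by auto
    then have "b \<in> punctured_line a"
      using ba by (auto simp: punctured_line_def)
    have "L' = punctured_line b" using rep(3)[OF L'(1)] L'(2) by simp
    also have "\<dots> = punctured_line a" using \<open>b \<in> punctured_line a\<close> by (rule punctured_line_eq)
    also have "\<dots> = L" using rep(3)[OF L(1)] L(2) by simp
    finally show "b = a" using L L' by simp
  qed
  moreover have "0 \<notin> rep ` ?L"
  proof
    assume "0 \<in> rep ` ?L"
    then obtain L where "L \<in> ?L" "0 = rep L" ..
    then show False using rep(2) by simp
  qed
  moreover have "inj_on rep ?L"
    by (rule inj_on_inverseI[of _ punctured_line]) (rule rep(3))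
  then have "card (rep ` ?L) = (CARD('a) ^ CARD('n) - 1) div (CARD('a) - 1)"
    by (simp add: card_image card_punctured_lines)
  ultimately show ?thesis
    by (intro exI[of _ "rep ` ?L"]) blast
qed

theorem proposition3p2:
  shows "\<exists>A B :: nat \<Rightarrow> ('a::{finite,field} ^ 'n) set.
           cross_intersecting_F ((CARD('a) ^ CARD('n) - 1) div (CARD('a) - 1)) A B"
proof -
  define m where "m = (CARD('a) ^ CARD('n) - 1) div (CARD('a) - 1)"
  obtain R :: "('a^'n) set" where R: "0 \<notin> R" "\<And>a b c. a \<in> R \<Longrightarrow> b \<in> R \<Longrightarrow> b = c *s a \<Longrightarrow> b = a"
    and card_R: "card R = m"
    using ex_nonproportional_vectors unfolding m_def by blast
  obtain r where r: "bij_betw r {1..m} R"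
    using ex_bij_betw_nat_finite_1[of R] card_R by auto
  have "cross_intersecting_F m (\<lambda>i. {y. vdot (r i) y = 0}) (\<lambda>i. {y. vdot (r i) y = 1})"
  proof (rule cross_intersecting_F_hyperplane_pairs)
    show "\<And>i. i \<in> {1..m} \<Longrightarrow> r i \<noteq> 0"
      using r R(1) bij_betw_apply by fastforce
    show "\<And>i j c. i \<in> {1..m} \<Longrightarrow> j \<in> {1..m} \<Longrightarrow> r j = c *s r i \<Longrightarrow> i = j"
      using r R(2) by (metis bij_betw_apply bij_betw_imp_inj_on inj_on_eq_iff)
  qed
  then show ?thesis unfolding m_def by blast
qed

end
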